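(* Let $\nu$ be a charge on $\mathbb{C}$ satisfying the Blaschke condition near infinity in $\mathbb{C}^{\mathrm{up}}$ (i.e. $\int_{\mathbb{C}^{\mathrm{up}}\setminus D(r_0)}\operatorname{Im}\frac1{\bar z}\,d|\nu|(z)<+\infty$ for some $r_0>0$), and let $\nu^{\mathrm{bal}}$ be its balayage from $\mathbb{C}^{\mathrm{up}}$. If $g\colon[0,+\infty)\to[0,+\infty)$ satisfies $g(r)>r$ for all $r>0$, then for every $r>0$ $$|\nu^{\mathrm{bal}}|(\overline D(r))\le|\nu|\bigl(\overline D(g(r))\bigr)+\frac{2r\,g^2(r)}{\pi(g(r)-r)^2}\int_{|z|\ge g(r)}\Bigl|\operatorname{Im}\frac1z\Bigr|\,d|\nu|(z).$$ If $\nu$ is of finite type at order $p\ge0$ near $\infty$ (i.e. $\limsup_{r\to+\infty}|\nu|(\overline D(r))/r^p<+\infty$), then $\nu^{\mathrm{bal}}$ is also of finite type at order $p$, and for $p\ge1$ $$\limsup_{r\to+\infty}\frac{|\nu^{\mathrm{bal}}|(\overline D(r))}{r^p}\le\limsup_{r\to+\infty}\frac{|\nu|(\overline D(r))}{r^p}.$$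
   Context: A charge on $\mathbb{C}$ is a countably additive function on Borel sets with values in $[-\infty,+\infty]$, finite on compact sets; $|\nu|$ is its total variation. $D(r)$, $\overline D(r)$: open/closed discs of radius $r$ centred at $0$. $\mathbb{C}^{\mathrm{up}}=\{\operatorname{Im}z>0\}$, $\mathbb{C}_{\overline{\mathrm{lw}}}=\{\operatorname{Im}z\le0\}$. Harmonic measure: $\omega(z,B)=\frac1\pi\int_{B\cap\mathbb{R}}\frac{\operatorname{Im}z}{(t-\operatorname{Re}z)^2+(\operatorname{Im}z)^2}dt$ for $z\in\mathbb{C}^{\mathrm{up}}$. Balayage from $\mathbb{C}^{\mathrm{up}}$: $\nu^{\mathrm{bal}}(B)=\int_{\mathbb{C}^{\mathrm{up}}}\omega(z,B)\,d\nu(z)+\nu(B\cap\mathbb{C}_{\overline{\mathrm{lw}}})$. *)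

theory Defs
  imports "HOL-Analysis.Analysis"
begin

text \<open>A charge on the complex plane is represented by its Jordan decomposition:
  two mutually singular positive Borel measures, both finite on compact sets.
  The charge is nu = Mp - Mn and its total variation is |nu| = Mp + Mn.\<close>

definition is_charge :: "complex measure \<Rightarrow> complex measure \<Rightarrow> bool" where
  "is_charge Mp Mn \<longleftrightarrow>
     sets Mp = sets borel \<and> sets Mn = sets borel \<and>
     (\<forall>K. compact K \<longrightarrow> emeasure Mp K < \<infinity> \<and> emeasure Mn K < \<infinity>) \<and>
     (\<exists>A \<in> sets borel. emeasure Mp (- A) = 0 \<and> emeasure Mn A = 0)"

definition absmeas :: "complex measure \<Rightarrow> complex measure \<Rightarrow> complex set \<Rightarrow> ennreal" where
  "absmeas Mp Mn B = emeasure Mp B + emeasure Mn B"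

definition abs_nn_integral ::
  "complex measure \<Rightarrow> complex measure \<Rightarrow> (complex \<Rightarrow> ennreal) \<Rightarrow> ennreal" where
  "abs_nn_integral Mp Mn f = (\<integral>\<^sup>+ z. f z \<partial>Mp) + (\<integral>\<^sup>+ z. f z \<partial>Mn)"

definition upper_half :: "complex set" where
  "upper_half = {z. Im z > 0}"

definition closed_lower_half :: "complex set" where
  "closed_lower_half = {z. Im z \<le> 0}"

definition harm_meas :: "complex \<Rightarrow> complex set \<Rightarrow> ennreal" where
  "harm_meas z B = ennreal (1 / pi) *
     (\<integral>\<^sup>+ t \<in> {t. complex_of_real t \<in> B}.
        ennreal (Im z / ((t - Re z)\<^sup>2 + (Im z)\<^sup>2)) \<partial>lborel)"

definition bal_pos :: "complex measure \<Rightarrow> complex set \<Rightarrow> ennreal" where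
  "bal_pos M B = (\<integral>\<^sup>+ z \<in> upper_half. harm_meas z B \<partial>M) + emeasure M (B \<inter> closed_lower_half)"

definition bal_charge :: "complex measure \<Rightarrow> complex measure \<Rightarrow> complex set \<Rightarrow> ereal" where
  "bal_charge Mp Mn B = enn2ereal (bal_pos Mp B) - enn2ereal (bal_pos Mn B)"

definition tot_var :: "(complex set \<Rightarrow> ereal) \<Rightarrow> complex set \<Rightarrow> ereal" where
  "tot_var \<mu> B = (SUP P \<in> {P. finite P \<and> disjoint P \<and> \<Union>P = B \<and> P \<subseteq> sets borel}.
                    \<Sum>A\<in>P. \<bar>\<mu> A\<bar>)"

definition blaschke_upper :: "complex measure \<Rightarrow> complex measure \<Rightarrow> bool" where
  "blaschke_upper Mp Mn \<longleftrightarrow> (\<exists>r0>0.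
     abs_nn_integral Mp Mn (\<lambda>z. indicator (upper_half - ball 0 r0) z * ennreal (Im (1 / cnj z))) < \<infinity>)"

end

theory Submission
  imports Defs
begin

(* For Im z > 0 the harmonic measure omega(z, -) has mass at most 1, and for |z| >= g > r the
   Poisson kernel is at most Im z g^2 / (|z|^2 (g - r)^2) on [-r, r], so
   omega(z, D(r)) <= 2 r g^2 / (pi (g - r)^2) * Im z / |z|^2.  Balayage is finitely additive,
   hence |nu^bal| <= nu_+^bal + nu_-^bal, and splitting the upper half-plane at |z| = g bounds
   each of these on D(r) by the mass of D(g) plus that constant times the tail integral T(g)
   of Im z / |z|^2 over {Im z > 0, |z| >= g}.
   For the growth at order p >= 1 take g = (1 + eta) r: the constant is then O(r) and the
   Blaschke condition makes T(g) tend to 0.  For p < 1 take g = 2 r: bounding 1/|z| on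
   {|z| >= g} by the sum over k of 1_{D(2^(k+1) g)} / (2^k g) gives T(g) = O(g^(p - 1)) from
   the growth of |nu| alone. *)

subsection \<open>Harmonic measure of the upper half-plane\<close>

lemma nn_integral_poisson_kernel_le:
  fixes x y :: real
  assumes y: "y > 0"
  shows "(\<integral>\<^sup>+ t. ennreal (y / ((t - x)\<^sup>2 + y\<^sup>2)) \<partial>lborel) \<le> ennreal pi"
proof -
  let ?P = "\<lambda>t. y / ((t - x)\<^sup>2 + y\<^sup>2)"
  let ?P_n = "\<lambda>(n::nat) t. ennreal (?P t) * indicator {- real n..real n} t"
  have P_nonneg: "0 \<le> ?P t" for t
    using y by simp
  have "(SUP n. ?P_n n t) = ennreal (?P t)" for t
  proof (rule LIMSEQ_unique[OF LIMSEQ_SUP])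
    obtain n where "\<bar>t\<bar> < real n"
      using reals_Archimedean2 by blast
    then have "eventually (\<lambda>m. ?P_n m t = ennreal (?P t)) sequentially"
      by (intro eventually_sequentiallyI[of n]) (auto split: split_indicator)
    then show "(\<lambda>n. ?P_n n t) \<longlonglongrightarrow> ennreal (?P t)"
      by (rule tendsto_eventually)
  qed (auto simp: incseq_def split: split_indicator)
  then have "(\<integral>\<^sup>+ t. ennreal (?P t) \<partial>lborel) = (\<integral>\<^sup>+ t. (SUP n. ?P_n n t) \<partial>lborel)"
    by simp
  also have "\<dots> = (SUP n. \<integral>\<^sup>+ t. ?P_n n t \<partial>lborel)"
    by (rule nn_integral_monotone_convergence_SUP) (auto simp: incseq_def le_fun_def split: split_indicator)
  also have "\<dots> \<le> ennreal pi"
  proof (rule SUP_least)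
    fix n :: nat
    have "(\<integral>\<^sup>+ t. ?P_n n t \<partial>lborel)
        = ennreal (arctan ((real n - x) / y) - arctan ((- real n - x) / y))"
    proof (rule nn_integral_FTC_Icc)
      fix t
      have "(t - x)\<^sup>2 + y\<^sup>2 \<noteq> 0"
        using y by (simp add: add_nonneg_pos)
      then show "((\<lambda>t. arctan ((t - x) / y)) has_real_derivative ?P t) (at t)"
        using y by (auto intro!: derivative_eq_intros simp: field_simps power2_eq_square)
    qed (use P_nonneg in auto)
    also have "\<dots> \<le> ennreal pi"
      using arctan_bounded[of "(real n - x) / y"] arctan_bounded[of "(- real n - x) / y"]
      by (intro ennreal_leI) simp
    finally show "(\<integral>\<^sup>+ t. ?P_n n t \<partial>lborel) \<le> ennreal pi" .
  qed
  finally show ?thesis .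
qed

lemma harm_meas_le_1:
  assumes "Im z > 0"
  shows "harm_meas z B \<le> 1"
proof -
  have "(\<integral>\<^sup>+ t \<in> {t. complex_of_real t \<in> B}. ennreal (Im z / ((t - Re z)\<^sup>2 + (Im z)\<^sup>2)) \<partial>lborel)
        \<le> ennreal pi"
    by (rule order_trans[OF _ nn_integral_poisson_kernel_le[OF assms]])
       (auto intro!: nn_integral_mono split: split_indicator)
  then have "harm_meas z B \<le> ennreal (1 / pi) * ennreal pi"
    unfolding harm_meas_def by (rule mult_left_mono) simp
  also have "\<dots> = 1"
    by (simp flip: ennreal_mult')
  finally show ?thesis .
qed

lemma poisson_kernel_le_far:
  fixes z :: complex and t r g :: real
  assumes y: "Im z > 0" and r: "0 < r" "r < g" and g: "g \<le> cmod z" and t: "\<bar>t\<bar> \<le> r"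
  shows "Im z / ((t - Re z)\<^sup>2 + (Im z)\<^sup>2) \<le> Im z * g\<^sup>2 / ((cmod z)\<^sup>2 * (g - r)\<^sup>2)"
proof -
  have "cmod z * (g - r) / g \<le> cmod z - r"
    using r g by (simp add: field_simps mult_left_mono)
  also have "\<dots> \<le> cmod (z - complex_of_real t)"
    using norm_triangle_ineq2[of z "complex_of_real t"] t by simp
  finally have "(cmod z * (g - r) / g)\<^sup>2 \<le> (cmod (z - complex_of_real t))\<^sup>2"
    using r g by (intro power_mono) auto
  also have "\<dots> = (t - Re z)\<^sup>2 + (Im z)\<^sup>2"
    by (simp add: cmod_power2 power2_commute)
  finally have "(cmod z)\<^sup>2 * (g - r)\<^sup>2 / g\<^sup>2 \<le> (t - Re z)\<^sup>2 + (Im z)\<^sup>2"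
    by (simp add: power_divide power_mult_distrib)
  moreover have "0 < (cmod z)\<^sup>2 * (g - r)\<^sup>2 / g\<^sup>2"
    using r g by (intro divide_pos_pos mult_pos_pos) auto
  ultimately have "Im z / ((t - Re z)\<^sup>2 + (Im z)\<^sup>2) \<le> Im z / ((cmod z)\<^sup>2 * (g - r)\<^sup>2 / g\<^sup>2)"
    using y by (intro divide_left_mono mult_pos_pos) auto
  then show ?thesis
    by simp
qed

definition bal_coeff :: "real \<Rightarrow> real \<Rightarrow> real" where
  "bal_coeff r g = 2 * r * g\<^sup>2 / (pi * (g - r)\<^sup>2)"

lemma bal_coeff_nonneg: "0 \<le> r \<Longrightarrow> 0 \<le> bal_coeff r g"
  unfolding bal_coeff_def by simp

lemma harm_meas_cball_le_far:
  assumes y: "Im z > 0" and r: "0 < r" "r < g" and g: "g \<le> cmod z"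
  shows "harm_meas z (cball 0 r) \<le> ennreal (bal_coeff r g) * ennreal (Im z / (cmod z)\<^sup>2)"
proof -
  define K where "K = Im z * g\<^sup>2 / ((cmod z)\<^sup>2 * (g - r)\<^sup>2)"
  have "{t. complex_of_real t \<in> cball 0 r} = {-r..r}"
    by auto
  then have "(\<integral>\<^sup>+ t \<in> {t. complex_of_real t \<in> cball 0 r}.
                ennreal (Im z / ((t - Re z)\<^sup>2 + (Im z)\<^sup>2)) \<partial>lborel)
             \<le> (\<integral>\<^sup>+ t. ennreal K * indicator {-r..r} t \<partial>lborel)"
    using poisson_kernel_le_far[OF y r g]
    by (auto simp: K_def intro!: nn_integral_mono ennreal_leI split: split_indicator)
  also have "\<dots> = ennreal (K * (2 * r))"
    using r y by (simp add: nn_integral_cmult_indicator K_def flip: ennreal_mult)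
  finally have "harm_meas z (cball 0 r) \<le> ennreal (1 / pi) * ennreal (K * (2 * r))"
    unfolding harm_meas_def by (rule mult_left_mono) simp
  also have "\<dots> = ennreal (bal_coeff r g) * ennreal (Im z / (cmod z)\<^sup>2)"
    using r y by (simp add: K_def bal_coeff_def field_simps flip: ennreal_mult)
  finally show ?thesis .
qed

subsection \<open>Balayage and its total variation on discs\<close>

lemma upper_half_borel [measurable]: "upper_half \<in> sets borel"
  unfolding upper_half_def by (intro borel_open open_Collect_less) (auto intro: continuous_intros)

lemma closed_lower_half_borel [measurable]: "closed_lower_half \<in> sets borel"
  unfolding closed_lower_half_def by (intro borel_closed closed_Collect_le) (auto intro: continuous_intros)

lemma borel_measurable_harm_meas [measurable]:
  assumes [measurable]: "A \<in> sets borel"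
  shows "(\<lambda>z. harm_meas z A) \<in> borel_measurable borel"
  unfolding harm_meas_def by measurable

lemma harm_meas_Union:
  assumes P: "finite P" "disjoint P" "P \<subseteq> sets borel"
  shows "harm_meas z (\<Union>P) = (\<Sum>A\<in>P. harm_meas z A)"
proof -
  have "disjoint_family_on (\<lambda>A. {t::real. complex_of_real t \<in> A}) P"
    using P(2) unfolding disjoint_family_on_def disjoint_def by blast
  moreover have "{t. complex_of_real t \<in> \<Union>P} = (\<Union>A\<in>P. {t. complex_of_real t \<in> A})"
    by blast
  ultimately have ind: "indicator {t. complex_of_real t \<in> \<Union>P} t
                          = (\<Sum>A\<in>P. indicator {t::real. complex_of_real t \<in> A} t :: ennreal)" for t
    using indicator_UN_disjoint[OF P(1)] by metis
  have "(\<lambda>t. ennreal (Im z / ((t - Re z)\<^sup>2 + (Im z)\<^sup>2)) * indicator {t. complex_of_real t \<in> A} t)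
          \<in> borel_measurable lborel" if "A \<in> P" for A
    using that P(3) by (auto intro!: measurable_sets_borel[of complex_of_real])
  then show ?thesis
    unfolding harm_meas_def ind
    by (simp add: sum_distrib_left sum_distrib_right nn_integral_sum mult.assoc)
qed

lemma bal_pos_Union:
  assumes M: "sets M = sets borel" and P: "finite P" "disjoint P" "P \<subseteq> sets borel"
  shows "bal_pos M (\<Union>P) = (\<Sum>A\<in>P. bal_pos M A)"
proof -
  have "(\<integral>\<^sup>+ z \<in> upper_half. harm_meas z (\<Union>P) \<partial>M) = (\<Sum>A\<in>P. \<integral>\<^sup>+ z \<in> upper_half. harm_meas z A \<partial>M)"
    unfolding harm_meas_Union[OF P] sum_distrib_right
    using P(3) by (intro nn_integral_sum) (auto simp: measurable_cong_sets[OF M refl])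
  moreover have "disjoint_family_on (\<lambda>A. A \<inter> closed_lower_half) P"
    using P(2) unfolding disjoint_family_on_def disjoint_def by blast
  then have "(\<Sum>A\<in>P. emeasure M (A \<inter> closed_lower_half)) = emeasure M (\<Union>A\<in>P. A \<inter> closed_lower_half)"
    using P(3) by (intro sum_emeasure P(1)) (auto simp: M)
  moreover have "(\<Union>A\<in>P. A \<inter> closed_lower_half) = \<Union>P \<inter> closed_lower_half"
    by blast
  ultimately show ?thesis
    unfolding bal_pos_def by (simp add: sum.distrib)
qed

lemma tot_var_diff_le:
  fixes \<mu> \<nu> :: "complex set \<Rightarrow> ennreal"
  assumes \<mu>: "\<And>P. finite P \<Longrightarrow> disjoint P \<Longrightarrow> P \<subseteq> sets borel \<Longrightarrow> \<mu> (\<Union>P) = (\<Sum>A\<in>P. \<mu> A)"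
    and \<nu>: "\<And>P. finite P \<Longrightarrow> disjoint P \<Longrightarrow> P \<subseteq> sets borel \<Longrightarrow> \<nu> (\<Union>P) = (\<Sum>A\<in>P. \<nu> A)"
  shows "tot_var (\<lambda>B. enn2ereal (\<mu> B) - enn2ereal (\<nu> B)) B \<le> enn2ereal (\<mu> B + \<nu> B)"
  unfolding tot_var_def
proof (rule SUP_least, clarify)
  fix P assume P: "finite P" "disjoint P" "P \<subseteq> sets borel" and "B = \<Union>P"
  have "\<bar>enn2ereal (\<mu> A) - enn2ereal (\<nu> A)\<bar> \<le> enn2ereal (\<mu> A + \<nu> A)" for A
    using enn2ereal_nonneg[of "\<mu> A"] enn2ereal_nonneg[of "\<nu> A"]
    by (cases "enn2ereal (\<mu> A)"; cases "enn2ereal (\<nu> A)") (auto simp: plus_ennreal.rep_eq)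
  then have "(\<Sum>A\<in>P. \<bar>enn2ereal (\<mu> A) - enn2ereal (\<nu> A)\<bar>) \<le> (\<Sum>A\<in>P. enn2ereal (\<mu> A + \<nu> A))"
    by (rule sum_mono)
  also have "\<dots> = enn2ereal (\<mu> (\<Union>P) + \<nu> (\<Union>P))"
    by (simp add: \<mu>[OF P] \<nu>[OF P] sum.distrib sum_enn2ereal)
  finally show "(\<Sum>A\<in>P. \<bar>enn2ereal (\<mu> A) - enn2ereal (\<nu> A)\<bar>) \<le> enn2ereal (\<mu> (\<Union>P) + \<nu> (\<Union>P))" .
qed

lemma tot_var_bal_charge_le:
  assumes "is_charge Mp Mn"
  shows "tot_var (bal_charge Mp Mn) B \<le> enn2ereal (bal_pos Mp B + bal_pos Mn B)"
  using assms unfolding bal_charge_def is_charge_def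
  by (intro tot_var_diff_le bal_pos_Union) auto

definition upper_tail :: "complex measure \<Rightarrow> real \<Rightarrow> ennreal" where
  "upper_tail M g =
     (\<integral>\<^sup>+ z. indicator (upper_half \<inter> {z. g \<le> cmod z}) z * ennreal (Im z / (cmod z)\<^sup>2) \<partial>M)"

lemma upper_tail_antimono: "g \<le> g' \<Longrightarrow> upper_tail M g' \<le> upper_tail M g"
  unfolding upper_tail_def by (intro nn_integral_mono) (auto split: split_indicator)

lemma harm_meas_cball_indicator_le:
  assumes r: "0 < r" "r < g"
  shows "harm_meas z (cball 0 r) * indicator upper_half z
           \<le> indicator (upper_half \<inter> ball 0 g) z
             + ennreal (bal_coeff r g)
               * (indicator (upper_half \<inter> {z. g \<le> cmod z}) z * ennreal (Im z / (cmod z)\<^sup>2))"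
proof (cases "z \<in> upper_half")
  case True
  then have "Im z > 0"
    by (simp add: upper_half_def)
  then show ?thesis
    using True harm_meas_le_1 harm_meas_cball_le_far[OF _ r] bal_coeff_nonneg r
    by (cases "cmod z < g") (auto simp: add_increasing add_increasing2)
qed simp

lemma bal_pos_cball_le:
  assumes M: "sets M = sets borel" and r: "0 < r" "r < g"
  shows "bal_pos M (cball 0 r) \<le> emeasure M (cball 0 g) + ennreal (bal_coeff r g) * upper_tail M g"
proof -
  have [measurable]: "upper_half \<inter> ball 0 g \<in> sets borel"
    by simp
  have "harm_meas z (cball 0 r) * indicator upper_half z
          \<le> indicator (upper_half \<inter> ball 0 g) z
            + ennreal (bal_coeff r g)
              * (indicator (upper_half \<inter> {z. g \<le> cmod z}) z * ennreal (Im z / (cmod z)\<^sup>2))" for z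
    using r by (rule harm_meas_cball_indicator_le)
  then have "(\<integral>\<^sup>+ z \<in> upper_half. harm_meas z (cball 0 r) \<partial>M)
               \<le> (\<integral>\<^sup>+ z. indicator (upper_half \<inter> ball 0 g) z
                    + ennreal (bal_coeff r g) * (indicator (upper_half \<inter> {z. g \<le> cmod z}) z
                                                 * ennreal (Im z / (cmod z)\<^sup>2)) \<partial>M)"
    by (intro nn_integral_mono)
  also have "\<dots> = emeasure M (upper_half \<inter> ball 0 g) + ennreal (bal_coeff r g) * upper_tail M g"
    unfolding upper_tail_def
    by (subst nn_integral_add) (auto simp: measurable_cong_sets[OF M refl] nn_integral_cmult M)
  finally have upper: "(\<integral>\<^sup>+ z \<in> upper_half. harm_meas z (cball 0 r) \<partial>M)
                  \<le> emeasure M (upper_half \<inter> ball 0 g) + ennreal (bal_coeff r g) * upper_tail M g" .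
  have halves: "emeasure M (upper_half \<inter> ball 0 g) + emeasure M (cball 0 r \<inter> closed_lower_half)
                   \<le> emeasure M (cball 0 g)"
  proof -
    have "emeasure M (upper_half \<inter> ball 0 g) + emeasure M (cball 0 r \<inter> closed_lower_half)
            = emeasure M ((upper_half \<inter> ball 0 g) \<union> (cball 0 r \<inter> closed_lower_half))"
      by (intro plus_emeasure) (auto simp: M upper_half_def closed_lower_half_def)
    also have "\<dots> \<le> emeasure M (cball 0 g)"
      using r by (intro emeasure_mono) (auto simp: M)
    finally show ?thesis .
  qed
  have "bal_pos M (cball 0 r)
          \<le> emeasure M (upper_half \<inter> ball 0 g) + ennreal (bal_coeff r g) * upper_tail M g
            + emeasure M (cball 0 r \<inter> closed_lower_half)"
    unfolding bal_pos_def using upper by (rule add_right_mono)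
  also have "\<dots> \<le> emeasure M (cball 0 g) + ennreal (bal_coeff r g) * upper_tail M g"
    using halves by (simp add: ac_simps add_right_mono)
  finally show ?thesis .
qed

lemma tot_var_bal_charge_cball_le:
  assumes ch: "is_charge Mp Mn" and r: "0 < r" "r < g"
  shows "tot_var (bal_charge Mp Mn) (cball 0 r)
           \<le> enn2ereal (absmeas Mp Mn (cball 0 g)
                        + ennreal (bal_coeff r g) * (upper_tail Mp g + upper_tail Mn g))"
proof -
  have "sets Mp = sets borel" "sets Mn = sets borel"
    using ch by (auto simp: is_charge_def)
  then have "bal_pos Mp (cball 0 r) + bal_pos Mn (cball 0 r)
               \<le> absmeas Mp Mn (cball 0 g) + ennreal (bal_coeff r g) * (upper_tail Mp g + upper_tail Mn g)"
    using add_mono[OF bal_pos_cball_le bal_pos_cball_le] r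
    by (simp add: absmeas_def distrib_left ac_simps)
  then have "enn2ereal (bal_pos Mp (cball 0 r) + bal_pos Mn (cball 0 r))
               \<le> enn2ereal (absmeas Mp Mn (cball 0 g)
                            + ennreal (bal_coeff r g) * (upper_tail Mp g + upper_tail Mn g))"
    by (simp add: less_eq_ennreal.rep_eq)
  with tot_var_bal_charge_le[OF ch] show ?thesis
    by (rule order_trans)
qed

lemma abs_Im_inverse: "\<bar>Im (1 / z)\<bar> = \<bar>Im z\<bar> / (cmod z)\<^sup>2"
  by (simp add: Im_divide' abs_divide)

lemma upper_tail_le_nn_integral:
  "upper_tail M g \<le> (\<integral>\<^sup>+ z. indicator {z. cmod z \<ge> g} z * ennreal \<bar>Im (1 / z)\<bar> \<partial>M)"
  unfolding upper_tail_def abs_Im_inverse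
  by (intro nn_integral_mono) (auto simp: upper_half_def split: split_indicator)

lemma tot_var_bal_charge_cball_le_tail_integral:
  assumes ch: "is_charge Mp Mn" and r: "0 < r" "r < g"
  shows "tot_var (bal_charge Mp Mn) (cball 0 r)
           \<le> enn2ereal (absmeas Mp Mn (cball 0 g))
             + ereal (2 * r * g\<^sup>2 / (pi * (g - r)\<^sup>2))
               * enn2ereal (abs_nn_integral Mp Mn (\<lambda>z. indicator {z. cmod z \<ge> g} z * ennreal \<bar>Im (1 / z)\<bar>))"
proof -
  let ?I = "abs_nn_integral Mp Mn (\<lambda>z. indicator {z. cmod z \<ge> g} z * ennreal \<bar>Im (1 / z)\<bar>)"
  have "absmeas Mp Mn (cball 0 g) + ennreal (bal_coeff r g) * (upper_tail Mp g + upper_tail Mn g)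
          \<le> absmeas Mp Mn (cball 0 g) + ennreal (bal_coeff r g) * ?I"
    unfolding abs_nn_integral_def
    by (intro add_left_mono mult_left_mono add_mono upper_tail_le_nn_integral) auto
  then have "enn2ereal (absmeas Mp Mn (cball 0 g) + ennreal (bal_coeff r g) * (upper_tail Mp g + upper_tail Mn g))
               \<le> enn2ereal (absmeas Mp Mn (cball 0 g)) + ereal (bal_coeff r g) * enn2ereal ?I"
    using bal_coeff_nonneg[of r g] r
    by (simp add: less_eq_ennreal.rep_eq plus_ennreal.rep_eq times_ennreal.rep_eq)
  then show ?thesis
    using tot_var_bal_charge_cball_le[OF ch r] unfolding bal_coeff_def by simp
qed

lemma tot_var_bal_charge_cball_le_real:
  assumes ch: "is_charge Mp Mn" and r: "0 < r" "r < g"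
    and X: "absmeas Mp Mn (cball 0 g) \<le> ennreal X" "0 \<le> X"
    and Y: "upper_tail Mp g + upper_tail Mn g \<le> ennreal Y" "0 \<le> Y"
  shows "tot_var (bal_charge Mp Mn) (cball 0 r) \<le> ereal (X + bal_coeff r g * Y)"
proof -
  have c: "0 \<le> bal_coeff r g"
    using r by (simp add: bal_coeff_nonneg)
  have "absmeas Mp Mn (cball 0 g) + ennreal (bal_coeff r g) * (upper_tail Mp g + upper_tail Mn g)
          \<le> ennreal X + ennreal (bal_coeff r g) * ennreal Y"
    using X Y by (intro add_mono mult_left_mono) auto
  also have "\<dots> = ennreal (X + bal_coeff r g * Y)"
    using X Y c by (simp add: ennreal_plus ennreal_mult)
  finally have "enn2ereal (absmeas Mp Mn (cball 0 g)
                           + ennreal (bal_coeff r g) * (upper_tail Mp g + upper_tail Mn g))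
                  \<le> enn2ereal (ennreal (X + bal_coeff r g * Y))"
    by (rule less_eq_ennreal.rep_eq[THEN iffD1])
  also have "\<dots> = ereal (X + bal_coeff r g * Y)"
    using X Y c by (intro enn2ereal_ennreal) simp
  finally have "enn2ereal (absmeas Mp Mn (cball 0 g)
                           + ennreal (bal_coeff r g) * (upper_tail Mp g + upper_tail Mn g))
                  \<le> ereal (X + bal_coeff r g * Y)" .
  with tot_var_bal_charge_cball_le[OF ch r] show ?thesis
    by (rule order_trans)
qed

subsection \<open>Growth at infinity\<close>

lemma Limsup_divide_powr_le:
  fixes F :: "real \<Rightarrow> ereal"
  assumes "eventually (\<lambda>r. F r \<le> ereal (Q * r powr p)) at_top"
  shows "Limsup at_top (\<lambda>r. F r / ereal (r powr p)) \<le> ereal Q"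
proof (rule Limsup_bounded)
  show "eventually (\<lambda>r. F r / ereal (r powr p) \<le> ereal Q) at_top"
    using assms eventually_gt_at_top[of 0]
  proof eventually_elim
    case (elim r)
    then have "F r / ereal (r powr p) \<le> ereal (Q * r powr p) / ereal (r powr p)"
      by (intro ereal_divide_right_mono) auto
    then show ?case
      using elim by simp
  qed
qed

lemma eventually_le_of_Limsup_divide_powr_less:
  fixes f :: "real \<Rightarrow> ennreal"
  assumes "Limsup at_top (\<lambda>r. enn2ereal (f r) / ereal (r powr p)) < ereal L"
  shows "eventually (\<lambda>r. f r \<le> ennreal (L * r powr p)) at_top"
  using Limsup_lessD[OF assms] eventually_gt_at_top[of 0]
proof eventually_elim
  case (elim r)
  then have rp: "r powr p > 0"
    by simp
  show ?case
  proof (cases "f r")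
    case (real a)
    then have "a / r powr p < L"
      using elim rp by simp
    then show ?thesis
      using real rp by (simp add: divide_less_eq ennreal_leI)
  qed (use elim rp in simp)
qed

lemma Limsup_divide_powr_realE:
  fixes f :: "real \<Rightarrow> ennreal"
  assumes "Limsup at_top (\<lambda>r. enn2ereal (f r) / ereal (r powr p)) < \<infinity>"
  obtains L where "Limsup at_top (\<lambda>r. enn2ereal (f r) / ereal (r powr p)) = ereal L" "0 \<le> L"
proof -
  have "eventually (\<lambda>r. 0 \<le> enn2ereal (f r) / ereal (r powr p)) at_top"
    using eventually_gt_at_top[of 0]
    by eventually_elim (simp add: ereal_divide_right_mono[of 0, simplified])
  then have "0 \<le> Limsup at_top (\<lambda>r. enn2ereal (f r) / ereal (r powr p))"
    by (intro le_Limsup) simp_all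
  with assms that show ?thesis
    by (cases "Limsup at_top (\<lambda>r. enn2ereal (f r) / ereal (r powr p))") auto
qed

lemma Im_inverse_cnj: "Im (1 / cnj z) = Im z / (cmod z)\<^sup>2"
  by (simp add: Im_divide')

lemma upper_tail_tendsto_0:
  assumes M: "sets M = sets borel"
    and fin: "(\<integral>\<^sup>+ z. indicator (upper_half - ball 0 r0) z * ennreal (Im (1 / cnj z)) \<partial>M) < \<infinity>"
  shows "(upper_tail M \<longlongrightarrow> 0) at_top"
proof (rule order_tendstoI)
  fix \<delta> :: ennreal assume "0 < \<delta>"
  define f where
    "f i z = indicator (upper_half \<inter> {z. r0 + real i \<le> cmod z}) z * ennreal (Im z / (cmod z)\<^sup>2)"
    for i z
  have "decseq f"
    by (rule decseq_SucI) (auto simp: le_fun_def f_def split: split_indicator)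
  moreover have "f i \<in> borel_measurable M" for i
    unfolding f_def by (simp add: measurable_cong_sets[OF M refl])
  moreover have "integral\<^sup>N M (f i) < \<infinity>" for i
  proof -
    have "integral\<^sup>N M (f i)
            \<le> (\<integral>\<^sup>+ z. indicator (upper_half - ball 0 r0) z * ennreal (Im (1 / cnj z)) \<partial>M)"
      unfolding f_def Im_inverse_cnj by (intro nn_integral_mono) (auto split: split_indicator)
    with fin show ?thesis
      by (simp add: le_less_trans)
  qed
  ultimately have "(INF i. integral\<^sup>N M (f i)) = (\<integral>\<^sup>+ z. (INF i. f i z) \<partial>M)"
    by (simp add: nn_integral_monotone_convergence_INF_decseq)
  also have "(\<lambda>z. INF i. f i z) = (\<lambda>z. 0)"
  proof
    fix z
    obtain i :: nat where "cmod z - r0 < real i"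
      using reals_Archimedean2 by blast
    then have "f i z = 0"
      unfolding f_def by (auto split: split_indicator)
    then show "(INF i. f i z) = 0"
      using INF_lower[of i UNIV "\<lambda>i. f i z"] by simp
  qed
  finally have "(INF i. integral\<^sup>N M (f i)) < \<delta>"
    using \<open>0 < \<delta>\<close> by simp
  then obtain i where "integral\<^sup>N M (f i) < \<delta>"
    by (auto simp: INF_less_iff)
  moreover have "upper_tail M g \<le> integral\<^sup>N M (f i)" if "g \<ge> r0 + real i" for g
    using upper_tail_antimono[OF that] unfolding upper_tail_def f_def .
  ultimately show "eventually (\<lambda>g. upper_tail M g < \<delta>) at_top"
    unfolding eventually_at_top_linorder by (meson le_less_trans)
qed simp

lemma upper_tail_integrand_le_dyadic:
  assumes g: "g > 0"
  shows "indicator (upper_half \<inter> {z. g \<le> cmod z}) z * ennreal (Im z / (cmod z)\<^sup>2)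
           \<le> (\<Sum>k. ennreal (1 / (2 ^ k * g)) * indicator (cball 0 (2 ^ Suc k * g)) z)"
proof (cases "z \<in> upper_half \<and> g \<le> cmod z")
  case True
  define k where "k = nat \<lfloor>log 2 (cmod z / g)\<rfloor>"
  have "1 \<le> cmod z / g"
    using True g by simp
  then have "real k = \<lfloor>log 2 (cmod z / g)\<rfloor>"
    unfolding k_def by simp
  then have "2 powr real k \<le> cmod z / g \<and> cmod z / g < 2 powr (real k + 1)"
    using floor_log_eq_powr_iff[of "cmod z / g" 2 "\<lfloor>log 2 (cmod z / g)\<rfloor>"] \<open>1 \<le> cmod z / g\<close>
    by simp
  then have k: "2 ^ k * g \<le> cmod z" "cmod z \<le> 2 ^ Suc k * g" "0 < 2 ^ k * g"
    using g by (auto simp: powr_realpow powr_add field_simps)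
  have "Im z / (cmod z)\<^sup>2 \<le> cmod z / (cmod z)\<^sup>2"
    using abs_Im_le_cmod[of z] by (intro divide_right_mono) auto
  also have "\<dots> = 1 / cmod z"
    by (simp add: power2_eq_square)
  also have "\<dots> \<le> 1 / (2 ^ k * g)"
    using k by (intro frac_le) auto
  finally have "indicator (upper_half \<inter> {z. g \<le> cmod z}) z * ennreal (Im z / (cmod z)\<^sup>2)
                  \<le> ennreal (1 / (2 ^ k * g)) * indicator (cball 0 (2 ^ Suc k * g)) z"
    using True k by (simp add: ennreal_leI)
  also have "\<dots> \<le> (\<Sum>k. ennreal (1 / (2 ^ k * g)) * indicator (cball 0 (2 ^ Suc k * g)) z)"
    using sum_le_suminf[OF summableI, of "{k}"] by simp
  finally show ?thesis .
qed auto

lemma powr_dyadic_scaling: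
  fixes g p :: real
  assumes g: "g > 0"
  shows "(2 ^ Suc k * g) powr p / (2 ^ k * g) = 2 powr p * g powr (p - 1) * (2 powr (p - 1)) ^ k"
proof -
  have "(2 powr (p - 1)) ^ k * 2 ^ k = 2 powr (real k * (p - 1)) * 2 powr real k"
    by (simp add: powr_power powr_realpow)
  also have "\<dots> = 2 powr (real k * p)"
    by (simp add: algebra_simps flip: powr_add)
  finally have "(2 ^ Suc k * g) powr p = 2 powr p * ((2 powr (p - 1)) ^ k * 2 ^ k) * (g * g powr (p - 1))"
    using g by (simp add: powr_mult powr_powr powr_add[symmetric] powr_realpow[symmetric] algebra_simps
                          powr_mult_base)
  then show ?thesis
    using g by (simp add: field_simps)
qed

lemma upper_tail_le_of_growth:
  assumes M: "sets M = sets borel" and p: "p < 1" and C: "C \<ge> 0" and g: "g > 0"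
    and growth: "\<And>s. s \<ge> g \<Longrightarrow> emeasure M (cball 0 s) \<le> ennreal (C * s powr p)"
  shows "upper_tail M g \<le> ennreal (C * 2 powr p / (1 - 2 powr (p - 1)) * g powr (p - 1))"
proof -
  define q :: real where "q = 2 powr (p - 1)"
  define K where "K = C * 2 powr p * g powr (p - 1)"
  have q: "0 < q" "q < 1"
    unfolding q_def using p by (auto simp: powr_less_one)
  have "indicator (upper_half \<inter> {z. g \<le> cmod z}) z * ennreal (Im z / (cmod z)\<^sup>2)
          \<le> (\<Sum>k. ennreal (1 / (2 ^ k * g)) * indicator (cball 0 (2 ^ Suc k * g)) z)" for z
    using g by (rule upper_tail_integrand_le_dyadic)
  then have "upper_tail M g \<le> (\<integral>\<^sup>+ z. (\<Sum>k. ennreal (1 / (2 ^ k * g)) * indicator (cball 0 (2 ^ Suc k * g)) z) \<partial>M)"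
    unfolding upper_tail_def by (rule nn_integral_mono)
  also have "\<dots> = (\<Sum>k. ennreal (1 / (2 ^ k * g)) * emeasure M (cball 0 (2 ^ Suc k * g)))"
  proof (subst nn_integral_suminf)
    show "(\<lambda>z. ennreal (1 / (2 ^ k * g)) * indicator (cball 0 (2 ^ Suc k * g)) z) \<in> borel_measurable M" for k
      by (intro borel_measurable_times_ennreal borel_measurable_const borel_measurable_indicator) (simp add: M)
  qed (simp add: M nn_integral_cmult_indicator)
  also have "\<dots> \<le> (\<Sum>k. ennreal (K * q ^ k))"
  proof (intro suminf_le summableI)
    fix k :: nat
    have "(1::real) \<le> 2 ^ Suc k"
      by (rule one_le_power) simp
    then have "g \<le> 2 ^ Suc k * g"
      using g by simp
    then have "ennreal (1 / (2 ^ k * g)) * emeasure M (cball 0 (2 ^ Suc k * g))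
                 \<le> ennreal (1 / (2 ^ k * g)) * ennreal (C * (2 ^ Suc k * g) powr p)"
      by (intro mult_left_mono growth) auto
    also have "\<dots> = ennreal (C * ((2 ^ Suc k * g) powr p / (2 ^ k * g)))"
      using g by (simp add: field_simps flip: ennreal_mult')
    also have "\<dots> = ennreal (K * q ^ k)"
      unfolding powr_dyadic_scaling[OF g] K_def q_def by (simp add: mult.assoc)
    finally show "ennreal (1 / (2 ^ k * g)) * emeasure M (cball 0 (2 ^ Suc k * g)) \<le> ennreal (K * q ^ k)" .
  qed
  also have "\<dots> = ennreal (K * (1 / (1 - q)))"
    using q C g by (intro suminf_ennreal_eq sums_mult geometric_sums) (auto simp: K_def)
  finally show ?thesis
    unfolding K_def q_def by simp
qed

lemma upper_tails_le_of_growth: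
  assumes ch: "is_charge Mp Mn" and p: "p < 1" and L: "0 \<le> L" and g: "g > 0"
    and growth: "\<And>s. s \<ge> g \<Longrightarrow> absmeas Mp Mn (cball 0 s) \<le> ennreal (L * s powr p)"
  shows "upper_tail Mp g + upper_tail Mn g
           \<le> ennreal (2 * L * 2 powr p / (1 - 2 powr (p - 1)) * g powr (p - 1))"
proof -
  define D where "D = L * 2 powr p / (1 - 2 powr (p - 1))"
  have "2 powr (p - 1) < (1::real)"
    using p by (simp add: powr_less_one)
  then have D: "0 \<le> D"
    unfolding D_def using L by simp
  have tail: "upper_tail M g \<le> ennreal (D * g powr (p - 1))" if M: "M = Mp \<or> M = Mn" for M
  proof (unfold D_def, rule upper_tail_le_of_growth[OF _ p L g])
    show "sets M = sets borel"
      using M ch by (auto simp: is_charge_def)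
    show "emeasure M (cball 0 s) \<le> ennreal (L * s powr p)" if "g \<le> s" for s
    proof -
      have "emeasure M (cball 0 s) \<le> absmeas Mp Mn (cball 0 s)"
        using M unfolding absmeas_def by (auto intro: add_increasing add_increasing2)
      also have "\<dots> \<le> ennreal (L * s powr p)"
        using growth that by simp
      finally show ?thesis .
    qed
  qed
  have "upper_tail Mp g + upper_tail Mn g \<le> ennreal (D * g powr (p - 1)) + ennreal (D * g powr (p - 1))"
    by (intro add_mono tail) simp_all
  also have "\<dots> = ennreal (2 * D * g powr (p - 1))"
    using D by (simp flip: ennreal_plus)
  finally show ?thesis
    by (simp add: D_def mult.assoc)
qed

lemma eventually_tot_var_bal_charge_le_lt1:
  assumes ch: "is_charge Mp Mn" and p: "p < 1" and L: "0 \<le> L"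
    and growth: "eventually (\<lambda>s. absmeas Mp Mn (cball 0 s) \<le> ennreal (L * s powr p)) at_top"
  shows "\<exists>Q. eventually (\<lambda>r. tot_var (bal_charge Mp Mn) (cball 0 r) \<le> ereal (Q * r powr p)) at_top"
proof -
  obtain S where S: "\<And>s. s \<ge> S \<Longrightarrow> 0 < s \<and> absmeas Mp Mn (cball 0 s) \<le> ennreal (L * s powr p)"
    using eventually_conj[OF eventually_gt_at_top[of 0] growth] unfolding eventually_at_top_linorder by blast
  define D where "D = 2 * L * 2 powr p / (1 - 2 powr (p - 1))"
  have "2 powr (p - 1) < (1::real)"
    using p by (simp add: powr_less_one)
  then have D: "0 \<le> D"
    unfolding D_def using L by simp
  define Q where "Q = L * 2 powr p + 8 / pi * D * 2 powr (p - 1)"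
  have "tot_var (bal_charge Mp Mn) (cball 0 r) \<le> ereal (Q * r powr p)" if r: "r \<ge> S" for r
  proof -
    have r0: "0 < r" "r < 2 * r"
      using S[OF r] by auto
    have "upper_tail Mp (2 * r) + upper_tail Mn (2 * r) \<le> ennreal (D * (2 * r) powr (p - 1))"
      unfolding D_def
    proof (rule upper_tails_le_of_growth[OF ch p L])
      show "absmeas Mp Mn (cball 0 s) \<le> ennreal (L * s powr p)" if "2 * r \<le> s" for s
        using S[of s] that r r0 by simp
    qed (use r0 in simp)
    then have "tot_var (bal_charge Mp Mn) (cball 0 r)
                 \<le> ereal (L * (2 * r) powr p + bal_coeff r (2 * r) * (D * (2 * r) powr (p - 1)))"
      using S[of "2 * r"] r r0 L D by (intro tot_var_bal_charge_cball_le_real[OF ch]) auto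
    also have "L * (2 * r) powr p + bal_coeff r (2 * r) * (D * (2 * r) powr (p - 1)) = Q * r powr p"
    proof -
      have "bal_coeff r (2 * r) = 8 / pi * r"
        unfolding bal_coeff_def using r0 by (simp add: field_simps power2_eq_square)
      moreover have "r * r powr (p - 1) = r powr p"
        using r0 by (simp add: powr_diff)
      ultimately show ?thesis
        using r0 by (simp add: Q_def powr_mult algebra_simps)
    qed
    finally show ?thesis .
  qed
  then show ?thesis
    unfolding eventually_at_top_linorder by blast
qed

lemma upper_tails_tendsto_0:
  assumes ch: "is_charge Mp Mn" and bl: "blaschke_upper Mp Mn"
  shows "((\<lambda>g. upper_tail Mp g + upper_tail Mn g) \<longlongrightarrow> 0) at_top"
proof -
  obtain r0 where
    "abs_nn_integral Mp Mn (\<lambda>z. indicator (upper_half - ball 0 r0) z * ennreal (Im (1 / cnj z))) < \<infinity>"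
    using bl unfolding blaschke_upper_def by blast
  then have "(\<integral>\<^sup>+ z. indicator (upper_half - ball 0 r0) z * ennreal (Im (1 / cnj z)) \<partial>Mp) < \<infinity>"
    "(\<integral>\<^sup>+ z. indicator (upper_half - ball 0 r0) z * ennreal (Im (1 / cnj z)) \<partial>Mn) < \<infinity>"
    unfolding abs_nn_integral_def by auto
  with ch show ?thesis
    using tendsto_add[OF upper_tail_tendsto_0 upper_tail_tendsto_0] by (auto simp: is_charge_def)
qed

lemma eventually_tot_var_bal_charge_le:
  assumes ch: "is_charge Mp Mn" and bl: "blaschke_upper Mp Mn" and p: "p \<ge> 1"
    and \<eta>: "\<eta> > 0" and L: "0 \<le> L"
    and growth: "eventually (\<lambda>s. absmeas Mp Mn (cball 0 s) \<le> ennreal (L * s powr p)) at_top"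
  shows "eventually (\<lambda>r. tot_var (bal_charge Mp Mn) (cball 0 r)
                          \<le> ereal ((L * (1 + \<eta>) powr p + \<eta>) * r powr p)) at_top"
proof -
  define K where "K = 2 * (1 + \<eta>)\<^sup>2 / (pi * \<eta>\<^sup>2)"
  have K: "K > 0"
    unfolding K_def using \<eta> by simp
  have "eventually (\<lambda>g. upper_tail Mp g + upper_tail Mn g < ennreal (\<eta> / K)) at_top"
    using order_tendstoD(2)[OF upper_tails_tendsto_0[OF ch bl]] \<eta> K by simp
  moreover have "filterlim (\<lambda>r. (1 + \<eta>) * r) at_top at_top"
    using \<eta> by (intro filterlim_tendsto_pos_mult_at_top[OF tendsto_const _ filterlim_ident]) simp
  ultimately have "eventually (\<lambda>r. absmeas Mp Mn (cball 0 ((1 + \<eta>) * r)) \<le> ennreal (L * ((1 + \<eta>) * r) powr p)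
                       \<and> upper_tail Mp ((1 + \<eta>) * r) + upper_tail Mn ((1 + \<eta>) * r) < ennreal (\<eta> / K)) at_top"
    using growth by (auto intro: eventually_compose_filterlim eventually_conj)
  with eventually_ge_at_top[of 1] show ?thesis
  proof eventually_elim
    case (elim r)
    define g where "g = (1 + \<eta>) * r"
    have r: "0 < r" "r < g"
      unfolding g_def using elim \<eta> by auto
    have "tot_var (bal_charge Mp Mn) (cball 0 r) \<le> ereal (L * g powr p + bal_coeff r g * (\<eta> / K))"
      using elim L \<eta> K by (intro tot_var_bal_charge_cball_le_real[OF ch r]) (auto simp: g_def)
    also have "bal_coeff r g * (\<eta> / K) = \<eta> * r"
    proof -
      have "bal_coeff r g = K * r"
        unfolding bal_coeff_def K_def g_def using r \<eta>
        by (simp add: power2_eq_square field_simps)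
      then show ?thesis
        using K by simp
    qed
    also have "\<dots> \<le> \<eta> * r powr p"
      using elim \<eta> p powr_mono[of 1 p r] by simp
    also have "L * g powr p = L * (1 + \<eta>) powr p * r powr p"
      unfolding g_def using r \<eta> by (simp add: powr_mult)
    finally show ?case
      by (simp add: algebra_simps)
  qed
qed

lemma ex_perturbation_less:
  fixes L p \<epsilon> :: real
  assumes "\<epsilon> > 0"
  shows "\<exists>\<eta>>0. (L + \<eta>) * (1 + \<eta>) powr p + \<eta> < L + \<epsilon>"
proof -
  have "((\<lambda>\<eta>. (L + \<eta>) * (1 + \<eta>) powr p + \<eta>) \<longlongrightarrow> (L + 0) * (1 + 0) powr p + 0) (at_right 0)"
    by (intro tendsto_intros) auto
  then have "eventually (\<lambda>\<eta>. (L + \<eta>) * (1 + \<eta>) powr p + \<eta> < L + \<epsilon>) (at_right 0)"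
    using assms by (intro order_tendstoD(2)) auto
  then obtain b where "b > 0" "\<And>\<eta>. 0 < \<eta> \<Longrightarrow> \<eta> < b \<Longrightarrow> (L + \<eta>) * (1 + \<eta>) powr p + \<eta> < L + \<epsilon>"
    by (auto simp: eventually_at_right_field)
  then show ?thesis
    by (intro exI[of _ "b / 2"]) auto
qed

lemma Limsup_tot_var_bal_charge_le:
  assumes ch: "is_charge Mp Mn" and bl: "blaschke_upper Mp Mn" and p: "p \<ge> 1"
    and fin: "Limsup at_top (\<lambda>r. enn2ereal (absmeas Mp Mn (cball 0 r)) / ereal (r powr p)) < \<infinity>"
  shows "Limsup at_top (\<lambda>r. tot_var (bal_charge Mp Mn) (cball 0 r) / ereal (r powr p))
           \<le> Limsup at_top (\<lambda>r. enn2ereal (absmeas Mp Mn (cball 0 r)) / ereal (r powr p))"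
proof -
  obtain L where L: "Limsup at_top (\<lambda>r. enn2ereal (absmeas Mp Mn (cball 0 r)) / ereal (r powr p)) = ereal L"
    "0 \<le> L"
    using Limsup_divide_powr_realE[OF fin] by blast
  show ?thesis
    unfolding L(1)
  proof (rule ereal_le_epsilon2)
    fix \<epsilon> :: real assume "0 < \<epsilon>"
    then obtain \<eta> where \<eta>: "\<eta> > 0" "(L + \<eta>) * (1 + \<eta>) powr p + \<eta> < L + \<epsilon>"
      using ex_perturbation_less by blast
    have "eventually (\<lambda>s. absmeas Mp Mn (cball 0 s) \<le> ennreal ((L + \<eta>) * s powr p)) at_top"
      using L \<eta> by (intro eventually_le_of_Limsup_divide_powr_less) simp
    then have "Limsup at_top (\<lambda>r. tot_var (bal_charge Mp Mn) (cball 0 r) / ereal (r powr p))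
                 \<le> ereal ((L + \<eta>) * (1 + \<eta>) powr p + \<eta>)"
      using L \<eta> by (intro Limsup_divide_powr_le eventually_tot_var_bal_charge_le[OF ch bl p]) auto
    also have "\<dots> \<le> ereal L + ereal \<epsilon>"
      using \<eta> by simp
    finally show "Limsup at_top (\<lambda>r. tot_var (bal_charge Mp Mn) (cball 0 r) / ereal (r powr p))
                    \<le> ereal L + ereal \<epsilon>" .
  qed
qed

lemma Limsup_tot_var_bal_charge_finite_lt1:
  assumes ch: "is_charge Mp Mn" and p: "p < 1"
    and fin: "Limsup at_top (\<lambda>r. enn2ereal (absmeas Mp Mn (cball 0 r)) / ereal (r powr p)) < \<infinity>"
  shows "Limsup at_top (\<lambda>r. tot_var (bal_charge Mp Mn) (cball 0 r) / ereal (r powr p)) < \<infinity>"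
proof -
  obtain L where "Limsup at_top (\<lambda>r. enn2ereal (absmeas Mp Mn (cball 0 r)) / ereal (r powr p)) = ereal L"
    "0 \<le> L"
    using Limsup_divide_powr_realE[OF fin] by blast
  then have "eventually (\<lambda>s. absmeas Mp Mn (cball 0 s) \<le> ennreal ((L + 1) * s powr p)) at_top"
    by (intro eventually_le_of_Limsup_divide_powr_less) simp
  then obtain Q where "eventually (\<lambda>r. tot_var (bal_charge Mp Mn) (cball 0 r) \<le> ereal (Q * r powr p)) at_top"
    using eventually_tot_var_bal_charge_le_lt1[OF ch p, of "L + 1"] \<open>0 \<le> L\<close> by auto
  then have "Limsup at_top (\<lambda>r. tot_var (bal_charge Mp Mn) (cball 0 r) / ereal (r powr p)) \<le> ereal Q"
    by (rule Limsup_divide_powr_le)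
  also have "ereal Q < \<infinity>"
    by simp
  finally show ?thesis .
qed

lemma Limsup_tot_var_bal_charge_finite:
  assumes ch: "is_charge Mp Mn" and bl: "blaschke_upper Mp Mn"
    and fin: "Limsup at_top (\<lambda>r. enn2ereal (absmeas Mp Mn (cball 0 r)) / ereal (r powr p)) < \<infinity>"
  shows "Limsup at_top (\<lambda>r. tot_var (bal_charge Mp Mn) (cball 0 r) / ereal (r powr p)) < \<infinity>"
proof (cases "p < 1")
  case True
  then show ?thesis
    by (rule Limsup_tot_var_bal_charge_finite_lt1[OF ch _ fin])
next
  case False
  then have "Limsup at_top (\<lambda>r. tot_var (bal_charge Mp Mn) (cball 0 r) / ereal (r powr p))
               \<le> Limsup at_top (\<lambda>r. enn2ereal (absmeas Mp Mn (cball 0 r)) / ereal (r powr p))"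
    by (intro Limsup_tot_var_bal_charge_le[OF ch bl _ fin]) simp
  then show ?thesis
    using fin by (rule le_less_trans)
qed

theorem proposition11:
  fixes Mp Mn :: "complex measure"
  assumes charge: "is_charge Mp Mn"
    and blaschke: "blaschke_upper Mp Mn"
  shows "(\<forall>g :: real \<Rightarrow> real. (\<forall>r\<ge>0. g r \<ge> 0) \<and> (\<forall>r>0. g r > r) \<longrightarrow>
            (\<forall>r>0. tot_var (bal_charge Mp Mn) (cball 0 r)
               \<le> enn2ereal (absmeas Mp Mn (cball 0 (g r)))
                 + ereal (2 * r * (g r)\<^sup>2 / (pi * (g r - r)\<^sup>2))
                   * enn2ereal (abs_nn_integral Mp Mn
                       (\<lambda>z. indicator {z. cmod z \<ge> g r} z * ennreal \<bar>Im (1 / z)\<bar>))))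
       \<and> (\<forall>p::real. p \<ge> 0 \<and>
            Limsup at_top (\<lambda>r. enn2ereal (absmeas Mp Mn (cball 0 r)) / ereal (r powr p)) < \<infinity>
            \<longrightarrow> Limsup at_top (\<lambda>r. tot_var (bal_charge Mp Mn) (cball 0 r) / ereal (r powr p)) < \<infinity>
              \<and> (p \<ge> 1 \<longrightarrow>
                   Limsup at_top (\<lambda>r. tot_var (bal_charge Mp Mn) (cball 0 r) / ereal (r powr p))
                   \<le> Limsup at_top (\<lambda>r. enn2ereal (absmeas Mp Mn (cball 0 r)) / ereal (r powr p))))"
  using tot_var_bal_charge_cball_le_tail_integral[OF charge]
    Limsup_tot_var_bal_charge_finite[OF charge blaschke] Limsup_tot_var_bal_charge_le[OF charge blaschke]
  by blast

end
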